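(* Let $k\ge1$ be odd, $\omega=\frac{1+\sqrt{-7}}{2}$, and with $S=\begin{psmallmatrix}0&-1\\1&0\end{psmallmatrix}$, $T=\begin{psmallmatrix}1&1\\0&1\end{psmallmatrix}$, $T_\omega=\begin{psmallmatrix}1&\omega\\0&1\end{psmallmatrix}$, $U=TS$, let $W_{k,k}=\ker(\mathbf{1}+S)\cap\ker(\mathbf{1}+U+U^2)\cap\ker(T+ST_\omega+T_\omega ST+ST_\omega^{-1}ST_\omega)$. Let $\varepsilon=\begin{psmallmatrix}-1&0\\0&1\end{psmallmatrix}$, so $P|\varepsilon=P(-z,-\bar z)$. Then $W_{k,k}|\varepsilon=W_{k,k}$, and hence $W_{k,k}=W_{k,k}^1\oplus W_{k,k}^{-1}$, where $W_{k,k}^{\pm1}=W_{k,k}\cap\{P\in V_{k,k}:P(-z,-\bar z)=\pm P(z,\bar z)\}$.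
   Context: $V_{k,k}$: polynomials $\sum_{0\le i,j\le k}c_{ij}z^i\bar z^j$ over $\mathbb{C}$ with right action $(P|\gamma)(z,\bar z)=(cz+e)^k\overline{(cz+e)}^kP\!\left(\frac{az+b}{cz+e},\frac{\bar a\bar z+\bar b}{\bar c\bar z+\bar e}\right)$ for $\gamma=\begin{psmallmatrix}a&b\\c&e\end{psmallmatrix}$, extended linearly; $\ker(X)=\{P:P|X=0\}$; $W|\varepsilon=\{P|\varepsilon:P\in W\}$. *)

theory Defs
  imports Complex_Main "HOL-Computational_Algebra.Polynomial"
begin

text \<open>A polynomial P(z, zbar) = sum c_ij z^i zbar^j is represented as a bivariate
  polynomial of type complex poly poly: the outer variable stands for zbar,
  the inner (coefficient) variable for z. So coeff (coeff P j) i = c_ij.\<close>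

definition Vkk :: "nat \<Rightarrow> complex poly poly set" where
  "Vkk k = {P. degree P \<le> k \<and> (\<forall>j. degree (coeff P j) \<le> k)}"

definition ev2 :: "complex poly poly \<Rightarrow> complex \<Rightarrow> complex \<Rightarrow> complex" where
  "ev2 P z w = poly (map_poly (\<lambda>q. poly q z) P) w"

text \<open>2x2 complex matrices (a, b, c, e) = [[a, b], [c, e]].\<close>
type_synonym mat2 = "complex \<times> complex \<times> complex \<times> complex"

definition mmul :: "mat2 \<Rightarrow> mat2 \<Rightarrow> mat2" where
  "mmul A B = (case A of (a, b, c, e) \<Rightarrow> case B of (a', b', c', e') \<Rightarrow>
     (a*a' + b*c', a*b' + b*e', c*a' + e*c', c*b' + e*e'))"

text \<open>The slash action (P|gamma)(z,zbar) = (cz+e)^k conj(cz+e)^k P((az+b)/(cz+e), conj(..)),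
  written without denominators: for P in V_{k,k} this equals
  sum_{i,j} c_ij (az+b)^i (cz+e)^(k-i) (conj a zbar + conj b)^j (conj c zbar + conj e)^(k-j).\<close>
definition slash :: "nat \<Rightarrow> complex poly poly \<Rightarrow> mat2 \<Rightarrow> complex poly poly" where
  "slash k P g = (case g of (a, b, c, e) \<Rightarrow>
     (\<Sum>j\<le>k. \<Sum>i\<le>k.
        smult (smult (coeff (coeff P j) i) ([:b, a:] ^ i * [:e, c:] ^ (k - i)))
          ([:[:cnj b:], [:cnj a:]:] ^ j * [:[:cnj e:], [:cnj c:]:] ^ (k - j))))"

text \<open>Action of a group ring element given as a list of matrices, each with coefficient 1.\<close>
definition slash_sum :: "nat \<Rightarrow> complex poly poly \<Rightarrow> mat2 list \<Rightarrow> complex poly poly" where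
  "slash_sum k P Xs = sum_list (map (slash k P) Xs)"

definition kerX :: "nat \<Rightarrow> mat2 list \<Rightarrow> complex poly poly set" where
  "kerX k Xs = {P \<in> Vkk k. slash_sum k P Xs = 0}"

definition omega :: complex where "omega = Complex (1/2) (sqrt 7 / 2)"

definition I2 :: mat2 where "I2 = (1, 0, 0, 1)"
definition Smat :: mat2 where "Smat = (0, -1, 1, 0)"
definition Tmat :: mat2 where "Tmat = (1, 1, 0, 1)"
definition Tw :: mat2 where "Tw = (1, omega, 0, 1)"
definition Twinv :: mat2 where "Twinv = (1, -omega, 0, 1)"
definition Umat :: mat2 where "Umat = mmul Tmat Smat"
definition epsmat :: mat2 where "epsmat = (-1, 0, 0, 1)"

definition Wkk :: "nat \<Rightarrow> complex poly poly set" where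
  "Wkk k = kerX k [I2, Smat]
         \<inter> kerX k [I2, Umat, mmul Umat Umat]
         \<inter> kerX k [Tmat, mmul Smat Tw, mmul (mmul Tw Smat) Tmat,
                    mmul (mmul (mmul Smat Twinv) Smat) Tw]"

definition Wpm :: "nat \<Rightarrow> complex \<Rightarrow> complex poly poly set" where
  "Wpm k s = Wkk k \<inter> {P \<in> Vkk k. \<forall>z w. ev2 P (-z) (-w) = s * ev2 P z w}"

end

theory Submission
  imports Defs "HOL-Library.Product_Plus"
begin

text \<open>The slash operator is a right action, \<open>P|g|h = P|(gh)\<close>, of the matrices with
  non-zero bottom row, and \<open>-g\<close> acts like \<open>g\<close>: both follow by expressing \<open>P|g\<close> through the
  bihomogeneous form of \<open>P\<close> and comparing polynomial functions. Since \<open>\<epsilon>\<^sup>2 = 1\<close>, we have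
  \<open>(P|\<epsilon>)|X = (P|\<epsilon>X\<epsilon>)|\<epsilon>\<close>, so it suffices to show that \<open>W\<^sub>k\<^sub>,\<^sub>k\<close> is annihilated by the
  three conjugated group ring elements. This follows from \<open>P|S = -P\<close> on \<open>W\<^sub>k\<^sub>,\<^sub>k\<close> together with
  \<open>\<epsilon>S\<epsilon> = -S\<close>, \<open>\<epsilon>U\<epsilon> = SU\<^sup>2S\<close>, \<open>\<epsilon>U\<^sup>2\<epsilon> = SUS\<close> and an analogous identity for the
  \<open>T\<^sub>\<omega>\<close>-relation. Hence \<open>W\<^sub>k\<^sub>,\<^sub>k\<close> is \<open>\<epsilon>\<close>-stable, and the projections \<open>(1 \<plusminus> \<epsilon>)/2\<close>
  split it into the two eigenspaces, which meet only in \<open>0\<close>.\<close>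

section \<open>Polynomials in one and two variables\<close>

lemma poly_eq_0_if_infinite_roots:
  fixes p :: "'a::idom poly"
  assumes "infinite A" and "\<And>x. x \<in> A \<Longrightarrow> poly p x = 0"
  shows "p = 0"
  using assms poly_roots_finite[of p] finite_subset[of A "{x. poly p x = 0}"] by blast

lemma poly_eq_sum_atMost:
  fixes p :: "'a::comm_semiring_1 poly"
  assumes "degree p \<le> k"
  shows "poly p x = (\<Sum>i\<le>k. coeff p i * x ^ i)"
proof -
  have "poly p x = (\<Sum>i\<le>degree p. coeff p i * x ^ i)"
    by (rule poly_altdef)
  also have "\<dots> = (\<Sum>i\<le>k. coeff p i * x ^ i)"
    using assms by (intro sum.mono_neutral_left) (auto simp: coeff_eq_0)
  finally show ?thesis .
qed

lemma degree_linear_powers_le: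
  fixes a b c e :: "'a::comm_semiring_1"
  assumes "i \<le> k"
  shows "degree ([:b, a:] ^ i * [:e, c:] ^ (k - i)) \<le> k"
proof -
  have "degree ([:b, a:] ^ i * [:e, c:] ^ (k - i)) \<le> degree [:b, a:] * i + degree [:e, c:] * (k - i)"
    by (intro order_trans[OF degree_mult_le] add_mono degree_power_le)
  also have "\<dots> \<le> 1 * i + 1 * (k - i)"
    by (intro add_mono mult_right_mono) simp_all
  finally show ?thesis
    using assms by simp
qed

lemma affine_nonzero_off_point:
  fixes c e :: "'a::field"
  assumes "c \<noteq> 0 \<or> e \<noteq> 0"
  obtains z0 where "\<And>z. z \<noteq> z0 \<Longrightarrow> c * z + e \<noteq> 0"
proof (cases "c = 0")
  case True
  then show ?thesis
    using assms that[of 0] by simp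
next
  case False
  show ?thesis
  proof (rule that)
    fix z
    assume "z \<noteq> - e / c"
    then show "c * z + e \<noteq> 0"
      using False by (auto simp: field_simps add_eq_0_iff2)
  qed
qed

definition const_coeffs :: "'a::zero poly poly \<Rightarrow> bool" where
  "const_coeffs Q \<longleftrightarrow> (\<forall>n. degree (coeff Q n) = 0)"

lemma const_coeffs_mult:
  fixes P Q :: "'a::comm_semiring_0 poly poly"
  assumes "const_coeffs P" and "const_coeffs Q"
  shows "const_coeffs (P * Q)"
  unfolding const_coeffs_def
proof
  fix n
  have "degree (coeff P i * coeff Q (n - i)) \<le> 0" for i
    using degree_mult_le[of "coeff P i" "coeff Q (n - i)"] assms by (simp add: const_coeffs_def)
  then have "degree (coeff (P * Q) n) \<le> 0"
    unfolding coeff_mult by (intro degree_sum_le) simp_all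
  then show "degree (coeff (P * Q) n) = 0" by simp
qed

lemma const_coeffs_power:
  fixes P :: "'a::comm_semiring_1 poly poly"
  assumes "const_coeffs P"
  shows "const_coeffs (P ^ n)"
proof (induction n)
  case 0
  show ?case by (simp add: const_coeffs_def coeff_1)
next
  case (Suc n)
  then show ?case by (simp add: const_coeffs_mult assms)
qed

lemma const_coeffs_linear: "const_coeffs [:[:b:], [:a:]:]"
  by (simp add: const_coeffs_def coeff_pCons split: nat.split)

lemma ev2_eq_poly_poly: "ev2 P z w = poly (poly P [:w:]) z"
  unfolding ev2_def
proof (induction P rule: pCons_induct)
  case (pCons a p)
  then show ?case by (simp add: map_poly_pCons algebra_simps)
qed simp

lemma ev2_0 [simp]: "ev2 0 z w = 0"
  and ev2_add: "ev2 (P + Q) z w = ev2 P z w + ev2 Q z w"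
  and ev2_diff: "ev2 (P - Q) z w = ev2 P z w - ev2 Q z w"
  and ev2_smult: "ev2 (smult [:c:] P) z w = c * ev2 P z w"
  by (simp_all add: ev2_eq_poly_poly)

lemma poly_poly_eq_0_off_lines:
  assumes "\<And>z w. z \<noteq> z0 \<Longrightarrow> w \<noteq> w0 \<Longrightarrow> ev2 P z w = 0"
  shows "P = 0"
proof (rule poly_eq_0_if_infinite_roots)
  have punctured_infinite: "infinite (UNIV - {x :: complex})" for x
    by (simp add: infinite_UNIV_char_0)
  then show "infinite ((\<lambda>w. [:w:]) ` (UNIV - {w0}))"
    by (simp add: finite_image_iff inj_on_def)
  show "poly P q = 0" if q_in: "q \<in> (\<lambda>w. [:w:]) ` (UNIV - {w0})" for q
  proof -
    obtain w where "w \<noteq> w0" and q: "q = [:w:]"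
      using q_in by blast
    then have "poly P [:w:] = 0"
      using assms by (intro poly_eq_0_if_infinite_roots[OF punctured_infinite[of z0]])
        (simp add: ev2_eq_poly_poly)
    then show ?thesis by (simp add: q)
  qed
qed

lemma ev2_inject:
  assumes "\<And>z w. ev2 P z w = ev2 Q z w"
  shows "P = Q"
  using poly_poly_eq_0_off_lines[of 0 0 "P - Q"] assms by (simp add: ev2_diff)

section \<open>The slash action\<close>

definition hom_eval ::
    "nat \<Rightarrow> complex poly poly \<Rightarrow> complex \<Rightarrow> complex \<Rightarrow> complex \<Rightarrow> complex \<Rightarrow> complex" where
  "hom_eval k P x1 x2 y1 y2 =
     (\<Sum>j\<le>k. \<Sum>i\<le>k. coeff (coeff P j) i * x1 ^ i * x2 ^ (k - i) * y1 ^ j * y2 ^ (k - j))"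

lemma ev2_slash:
  "ev2 (slash k P (a, b, c, e)) z w =
     hom_eval k P (a * z + b) (c * z + e) (cnj a * w + cnj b) (cnj c * w + cnj e)"
  by (simp add: slash_def hom_eval_def ev2_eq_poly_poly poly_sum algebra_simps)

lemma ev2_eq_hom_eval:
  assumes "P \<in> Vkk k"
  shows "ev2 P x y = hom_eval k P x 1 y 1"
proof -
  have deg: "degree P \<le> k" "\<And>j. degree (coeff P j) \<le> k"
    using assms by (auto simp: Vkk_def)
  have "ev2 P x y = (\<Sum>j\<le>k. poly (coeff P j) x * y ^ j)"
    unfolding ev2_eq_poly_poly poly_eq_sum_atMost[OF deg(1)] by (simp add: poly_sum)
  also have "\<dots> = hom_eval k P x 1 y 1"
    unfolding hom_eval_def poly_eq_sum_atMost[OF deg(2)] by (simp add: sum_distrib_right)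
  finally show ?thesis .
qed

lemma hom_eval_scale:
  "hom_eval k P (l * x1) (l * x2) (m * y1) (m * y2) = l ^ k * m ^ k * hom_eval k P x1 x2 y1 y2"
proof -
  have split_power: "l ^ i * l ^ (k - i) = l ^ k" if "i \<le> k" for i and l :: complex
    using that by (simp flip: power_add)
  have "c * (l * x1) ^ i * (l * x2) ^ (k - i) * (m * y1) ^ j * (m * y2) ^ (k - j) =
      l ^ k * m ^ k * (c * x1 ^ i * x2 ^ (k - i) * y1 ^ j * y2 ^ (k - j))"
    if "i \<le> k" "j \<le> k" for c i j
  proof -
    have "c * (l * x1) ^ i * (l * x2) ^ (k - i) * (m * y1) ^ j * (m * y2) ^ (k - j) =
        (l ^ i * l ^ (k - i)) * (m ^ j * m ^ (k - j)) * (c * x1 ^ i * x2 ^ (k - i) * y1 ^ j * y2 ^ (k - j))"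
      by (simp add: power_mult_distrib mult_ac)
    then show ?thesis
      using that by (simp only: split_power)
  qed
  then show ?thesis
    unfolding hom_eval_def sum_distrib_left by (intro sum.cong refl) simp
qed

lemma hom_eval_smult: "hom_eval k (smult [:c:] P) x1 x2 y1 y2 = c * hom_eval k P x1 x2 y1 y2"
  unfolding hom_eval_def by (simp add: sum_distrib_left mult_ac)

lemma Vkk_0: "0 \<in> Vkk k"
  by (simp add: Vkk_def)

lemma Vkk_add: "P \<in> Vkk k \<Longrightarrow> Q \<in> Vkk k \<Longrightarrow> P + Q \<in> Vkk k"
  by (auto simp: Vkk_def intro: degree_add_le)

lemma Vkk_smult: "P \<in> Vkk k \<Longrightarrow> smult [:c:] P \<in> Vkk k"
  by (auto simp: Vkk_def intro: order_trans[OF degree_smult_le])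

lemma Vkk_sum:
  assumes "finite A" and "\<And>x. x \<in> A \<Longrightarrow> f x \<in> Vkk k"
  shows "sum f A \<in> Vkk k"
  using assms by (auto simp: Vkk_def coeff_sum intro!: degree_sum_le)

lemma Vkk_smult_const_coeffs:
  assumes "degree p \<le> k" and "const_coeffs B" and "degree B \<le> k"
  shows "smult p B \<in> Vkk k"
proof -
  have "degree (p * coeff B n) \<le> k" for n
    using degree_mult_le[of p "coeff B n"] assms(1,2) by (simp add: const_coeffs_def)
  then show ?thesis
    using assms(3) degree_smult_le[of p B] by (simp add: Vkk_def mult.commute)
qed

lemma slash_in_Vkk: "slash k P g \<in> Vkk k"
proof -
  obtain a b c e where g: "g = (a, b, c, e)"
    by (cases g)
  let ?B = "\<lambda>j. [:[:cnj b:], [:cnj a:]:] ^ j * [:[:cnj e:], [:cnj c:]:] ^ (k - j)"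
  have "smult (smult (coeff (coeff P j) i) ([:b, a:] ^ i * [:e, c:] ^ (k - i))) (?B j) \<in> Vkk k"
    if "i \<le> k" "j \<le> k" for i j
  proof (rule Vkk_smult_const_coeffs)
    show "degree (smult (coeff (coeff P j) i) ([:b, a:] ^ i * [:e, c:] ^ (k - i))) \<le> k"
      using degree_smult_le degree_linear_powers_le[OF that(1)] order_trans by blast
    show "const_coeffs (?B j)"
      by (intro const_coeffs_mult const_coeffs_power const_coeffs_linear)
    show "degree (?B j) \<le> k"
      using degree_linear_powers_le[OF that(2)] .
  qed
  then show ?thesis
    unfolding slash_def g prod.case by (intro Vkk_sum finite_atMost) simp
qed

lemma slash_0 [simp]: "slash k 0 g = 0"
  by (cases g) (simp add: slash_def)

lemma slash_add: "slash k (P + Q) g = slash k P g + slash k Q g"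
  by (cases g) (simp add: slash_def smult_add_left sum.distrib)

lemma slash_uminus: "slash k (- P) g = - slash k P g"
  by (cases g) (simp add: slash_def sum_negf)

lemma slash_smult: "slash k (smult [:c:] P) g = smult [:c:] (slash k P g)"
  by (cases g, intro ev2_inject) (simp add: ev2_slash ev2_smult hom_eval_smult)

lemma hom_eval_slash:
  assumes "x2 \<noteq> 0" and "y2 \<noteq> 0"
  shows "hom_eval k (slash k P (a, b, c, e)) x1 x2 y1 y2 =
    hom_eval k P (a * x1 + b * x2) (c * x1 + e * x2) (cnj a * y1 + cnj b * y2) (cnj c * y1 + cnj e * y2)"
proof -
  have "hom_eval k (slash k P (a, b, c, e)) x1 x2 y1 y2 =
      hom_eval k (slash k P (a, b, c, e)) (x2 * (x1 / x2)) (x2 * 1) (y2 * (y1 / y2)) (y2 * 1)"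
    using assms by simp
  also have "\<dots> = x2 ^ k * y2 ^ k * ev2 (slash k P (a, b, c, e)) (x1 / x2) (y1 / y2)"
    by (simp only: hom_eval_scale ev2_eq_hom_eval[OF slash_in_Vkk])
  also have "\<dots> = x2 ^ k * y2 ^ k * hom_eval k P (a * (x1 / x2) + b) (c * (x1 / x2) + e)
      (cnj a * (y1 / y2) + cnj b) (cnj c * (y1 / y2) + cnj e)"
    by (simp only: ev2_slash)
  also have "\<dots> = hom_eval k P (x2 * (a * (x1 / x2) + b)) (x2 * (c * (x1 / x2) + e))
      (y2 * (cnj a * (y1 / y2) + cnj b)) (y2 * (cnj c * (y1 / y2) + cnj e))"
    by (simp only: hom_eval_scale)
  also have "\<dots> = hom_eval k P (a * x1 + b * x2) (c * x1 + e * x2)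
      (cnj a * y1 + cnj b * y2) (cnj c * y1 + cnj e * y2)"
  proof -
    have "x2 * (a * (x1 / x2) + b) = a * x1 + b * x2" "x2 * (c * (x1 / x2) + e) = c * x1 + e * x2"
      "y2 * (cnj a * (y1 / y2) + cnj b) = cnj a * y1 + cnj b * y2"
      "y2 * (cnj c * (y1 / y2) + cnj e) = cnj c * y1 + cnj e * y2"
      using assms by (simp_all add: field_simps)
    then show ?thesis
      by (simp only:)
  qed
  finally show ?thesis .
qed

definition bottom_row_nonzero :: "mat2 \<Rightarrow> bool" where
  "bottom_row_nonzero g \<longleftrightarrow> (case g of (a, b, c, e) \<Rightarrow> c \<noteq> 0 \<or> e \<noteq> 0)"

lemma slash_mmul:
  assumes "bottom_row_nonzero h"
  shows "slash k (slash k P g) h = slash k P (mmul g h)"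
proof -
  obtain a b c e where g: "g = (a, b, c, e)"
    by (cases g)
  obtain a' b' c' e' where h: "h = (a', b', c', e')"
    by (cases h)
  have "c' \<noteq> 0 \<or> e' \<noteq> 0"
    using assms by (simp add: h bottom_row_nonzero_def)
  then obtain z0 where z0: "\<And>z. z \<noteq> z0 \<Longrightarrow> c' * z + e' \<noteq> 0"
    using affine_nonzero_off_point by blast
  have "ev2 (slash k (slash k P g) h) z w = ev2 (slash k P (mmul g h)) z w"
    if "z \<noteq> z0" and "w \<noteq> cnj z0" for z w
  proof -
    have "cnj w \<noteq> z0"
      using that(2) by (metis complex_cnj_cnj)
    then have "cnj (cnj c' * w + cnj e') \<noteq> 0"
      using z0 by simp
    then have "cnj c' * w + cnj e' \<noteq> 0"
      by (metis complex_cnj_zero)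
    then show ?thesis
      using z0[OF that(1)] by (simp add: g h ev2_slash hom_eval_slash mmul_def algebra_simps)
  qed
  then have "slash k (slash k P g) h - slash k P (mmul g h) = 0"
    by (intro poly_poly_eq_0_off_lines) (simp add: ev2_diff)
  then show ?thesis
    by simp
qed

lemma slash_uminus_mat: "slash k P (- g) = slash k P g"
proof -
  obtain a b c e where g: "g = (a, b, c, e)"
    by (cases g)
  have "ev2 (slash k P (- g)) z w = ev2 (slash k P g) z w" for z w
  proof -
    have "ev2 (slash k P (- g)) z w = hom_eval k P ((- 1) * (a * z + b)) ((- 1) * (c * z + e))
        ((- 1) * (cnj a * w + cnj b)) ((- 1) * (cnj c * w + cnj e))"
      by (simp add: g ev2_slash algebra_simps)
    also have "\<dots> = ev2 (slash k P g) z w"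
      by (simp only: hom_eval_scale g ev2_slash) (simp flip: power_mult_distrib)
    finally show ?thesis .
  qed
  then show ?thesis
    by (rule ev2_inject)
qed

lemma slash_I2:
  assumes "P \<in> Vkk k"
  shows "slash k P I2 = P"
  using assms by (intro ev2_inject) (simp add: I2_def ev2_slash ev2_eq_hom_eval)

lemma ev2_slash_epsmat:
  assumes "P \<in> Vkk k"
  shows "ev2 (slash k P epsmat) z w = ev2 P (- z) (- w)"
  using assms by (simp add: epsmat_def ev2_slash ev2_eq_hom_eval)

lemma slash_epsmat_epsmat:
  assumes "P \<in> Vkk k"
  shows "slash k (slash k P epsmat) epsmat = P"
proof -
  have "slash k (slash k P epsmat) epsmat = slash k P (mmul epsmat epsmat)"
    by (rule slash_mmul) (simp add: bottom_row_nonzero_def epsmat_def)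
  also have "mmul epsmat epsmat = I2"
    by (simp add: mmul_def epsmat_def I2_def)
  finally show ?thesis
    using slash_I2[OF assms] by simp
qed

section \<open>Kernels and conjugation by \<open>\<epsilon>\<close>\<close>

lemma slash_sum_0 [simp]: "slash_sum k 0 Xs = 0"
  by (induction Xs) (simp_all add: slash_sum_def)

lemma slash_sum_add: "slash_sum k (P + Q) Xs = slash_sum k P Xs + slash_sum k Q Xs"
  by (induction Xs) (simp_all add: slash_sum_def slash_add)

lemma slash_sum_smult: "slash_sum k (smult [:c:] P) Xs = smult [:c:] (slash_sum k P Xs)"
  by (induction Xs) (simp_all add: slash_sum_def slash_smult smult_add_right)

lemma slash_slash_sum:
  assumes "bottom_row_nonzero g"
  shows "slash k (slash_sum k P Xs) g = slash_sum k P (map (\<lambda>X. mmul X g) Xs)"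
  by (induction Xs) (simp_all add: slash_sum_def slash_add slash_mmul assms)

lemma kerX_0: "0 \<in> kerX k Xs"
  by (simp add: kerX_def Vkk_0)

lemma kerX_add: "P \<in> kerX k Xs \<Longrightarrow> Q \<in> kerX k Xs \<Longrightarrow> P + Q \<in> kerX k Xs"
  by (simp add: kerX_def Vkk_add slash_sum_add)

lemma kerX_smult: "P \<in> kerX k Xs \<Longrightarrow> smult [:c:] P \<in> kerX k Xs"
  by (simp add: kerX_def Vkk_smult slash_sum_smult)

definition eps_conj :: "mat2 \<Rightarrow> mat2" where
  "eps_conj X = mmul (mmul epsmat X) epsmat"

lemma slash_epsmat_slash_sum:
  assumes "list_all bottom_row_nonzero Xs"
  shows "slash_sum k (slash k P epsmat) Xs = slash k (slash_sum k P (map eps_conj Xs)) epsmat"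
proof -
  have "mmul epsmat X = mmul (eps_conj X) epsmat" for X
    by (cases X) (simp add: eps_conj_def epsmat_def mmul_def)
  then have "slash_sum k (slash k P epsmat) Xs = slash_sum k P (map (\<lambda>X. mmul (eps_conj X) epsmat) Xs)"
    using assms by (induction Xs) (simp_all add: slash_sum_def slash_mmul)
  also have "\<dots> = slash k (slash_sum k P (map eps_conj Xs)) epsmat"
    by (simp add: slash_slash_sum bottom_row_nonzero_def epsmat_def comp_def)
  finally show ?thesis .
qed

lemma slash_epsmat_in_kerX:
  assumes "list_all bottom_row_nonzero Xs" and "slash_sum k P (map eps_conj Xs) = 0"
  shows "slash k P epsmat \<in> kerX k Xs"
  using assms by (simp add: kerX_def slash_in_Vkk slash_epsmat_slash_sum)

lemma kerX_Smat_iff: "P \<in> kerX k [I2, Smat] \<longleftrightarrow> P \<in> Vkk k \<and> slash k P Smat = - P"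
  by (auto simp: kerX_def slash_sum_def slash_I2 eq_neg_iff_add_eq_0 add.commute)

lemma slash_Smat_mmul:
  assumes "slash k P Smat = - P" and "bottom_row_nonzero g"
  shows "slash k P (mmul Smat g) = - slash k P g"
  using slash_mmul[OF assms(2), of k P Smat] by (simp add: assms(1) slash_uminus)

lemma slash_Smat_conj:
  assumes S: "slash k P Smat = - P" and "bottom_row_nonzero X"
  shows "slash k P (mmul Smat (mmul X Smat)) = - slash k (slash k P X) Smat"
proof -
  have "bottom_row_nonzero (mmul X Smat)"
    using assms(2) by (cases X) (auto simp: bottom_row_nonzero_def Smat_def mmul_def)
  then have "slash k P (mmul Smat (mmul X Smat)) = - slash k P (mmul X Smat)"
    by (rule slash_Smat_mmul[OF S])
  also have "slash k P (mmul X Smat) = slash k (slash k P X) Smat"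
    by (rule slash_mmul[symmetric]) (simp add: bottom_row_nonzero_def Smat_def)
  finally show ?thesis .
qed

lemma slash_epsmat_kerX_Smat:
  assumes "P \<in> kerX k [I2, Smat]"
  shows "slash k P epsmat \<in> kerX k [I2, Smat]"
proof (rule slash_epsmat_in_kerX)
  show "list_all bottom_row_nonzero [I2, Smat]"
    by (simp add: bottom_row_nonzero_def I2_def Smat_def)
  have "map eps_conj [I2, Smat] = [I2, - Smat]"
    by (simp add: eps_conj_def epsmat_def mmul_def I2_def Smat_def)
  then show "slash_sum k P (map eps_conj [I2, Smat]) = 0"
    using assms by (simp add: kerX_def slash_sum_def slash_uminus_mat)
qed

lemma slash_epsmat_kerX_Umat:
  assumes "P \<in> kerX k [I2, Smat]" and "P \<in> kerX k [I2, Umat, mmul Umat Umat]"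
  shows "slash k P epsmat \<in> kerX k [I2, Umat, mmul Umat Umat]"
proof (rule slash_epsmat_in_kerX)
  have U: "Umat = (1, -1, 1, 0)" and U2: "mmul Umat Umat = (0, -1, 1, -1)"
    by (simp_all add: Umat_def Smat_def Tmat_def mmul_def)
  show "list_all bottom_row_nonzero [I2, Umat, mmul Umat Umat]"
    by (simp add: bottom_row_nonzero_def I2_def Umat_def Smat_def Tmat_def mmul_def)
  have P: "P \<in> Vkk k" and S: "slash k P Smat = - P"
    using assms(1) by (simp_all add: kerX_Smat_iff)
  have "slash k P Umat + slash k P (mmul Umat Umat) = - P"
    using assms(2) P by (simp add: kerX_def slash_sum_def slash_I2 eq_neg_iff_add_eq_0 add_ac)
  then have "slash k (slash k P Umat + slash k P (mmul Umat Umat)) Smat = slash k (- P) Smat"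
    by simp
  then have UU_S: "slash k (slash k P Umat) Smat + slash k (slash k P (mmul Umat Umat)) Smat = P"
    by (simp add: slash_add slash_uminus S)
  have "eps_conj Umat = mmul Smat (mmul (mmul Umat Umat) Smat)"
    by (simp add: eps_conj_def epsmat_def U U2 Smat_def mmul_def)
  also have "slash k P \<dots> = - slash k (slash k P (mmul Umat Umat)) Smat"
    by (rule slash_Smat_conj[OF S]) (simp add: U2 bottom_row_nonzero_def)
  finally have conj_U: "slash k P (eps_conj Umat) = - slash k (slash k P (mmul Umat Umat)) Smat" .
  have "eps_conj (mmul Umat Umat) = mmul Smat (mmul Umat Smat)"
    by (simp add: eps_conj_def epsmat_def U U2 Smat_def mmul_def)
  also have "slash k P \<dots> = - slash k (slash k P Umat) Smat"
    by (rule slash_Smat_conj[OF S]) (simp add: U bottom_row_nonzero_def)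
  finally have conj_U2: "slash k P (eps_conj (mmul Umat Umat)) = - slash k (slash k P Umat) Smat" .
  have "eps_conj I2 = I2"
    by (simp add: eps_conj_def epsmat_def I2_def mmul_def)
  then have "slash_sum k P (map eps_conj [I2, Umat, mmul Umat Umat]) =
      P - (slash k (slash k P Umat) Smat + slash k (slash k P (mmul Umat Umat)) Smat)"
    by (simp add: slash_sum_def slash_I2[OF P] conj_U conj_U2 algebra_simps)
  then show "slash_sum k P (map eps_conj [I2, Umat, mmul Umat Umat]) = 0"
    by (simp add: UU_S)
qed

lemma omega_neq_0: "omega \<noteq> 0"
  by (simp add: omega_def complex_eq_iff)

text \<open>Conjugation by \<open>\<epsilon>\<close> inverts \<open>T\<close> and \<open>T\<^sub>\<omega>\<close> and negates \<open>S\<close>. Hence, with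
  \<open>G = T\<^sup>-\<^sup>1T\<^sub>\<omega>\<^sup>-\<^sup>1\<close> and \<open>A\<^sub>i = X\<^sub>i G\<close> for the four terms \<open>X\<^sub>i\<close> of the relation, the
  conjugated terms are \<open>\<plusminus>S A\<^sub>i\<close> in the order 2, 1, 4, 3.\<close>

lemma slash_epsmat_kerX_Tw:
  assumes "P \<in> kerX k [I2, Smat]"
    and "P \<in> kerX k [Tmat, mmul Smat Tw, mmul (mmul Tw Smat) Tmat, mmul (mmul (mmul Smat Twinv) Smat) Tw]"
  shows "slash k P epsmat \<in>
    kerX k [Tmat, mmul Smat Tw, mmul (mmul Tw Smat) Tmat, mmul (mmul (mmul Smat Twinv) Smat) Tw]"
proof (rule slash_epsmat_in_kerX)
  let ?Xs = "[Tmat, mmul Smat Tw, mmul (mmul Tw Smat) Tmat, mmul (mmul (mmul Smat Twinv) Smat) Tw]"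
  define G :: mat2 where "G = (1, - 1 - omega, 0, 1)"
  define A1 A2 A3 A4 :: mat2
    where "A1 = (1, - omega, 0, 1)" and "A2 = (0, - 1, 1, - 1)"
      and "A3 = (omega, - omega * omega - 1, 1, - omega)" and "A4 = (- 1, 1, - omega, omega - 1)"
  show "list_all bottom_row_nonzero ?Xs"
    by (simp add: bottom_row_nonzero_def Tmat_def Smat_def Tw_def Twinv_def mmul_def omega_neq_0)
  have S: "slash k P Smat = - P"
    using assms(1) by (simp add: kerX_Smat_iff)
  have nonzero: "bottom_row_nonzero A1" "bottom_row_nonzero A2" "bottom_row_nonzero A3"
    "bottom_row_nonzero A4" "bottom_row_nonzero G"
    by (simp_all add: bottom_row_nonzero_def A1_def A2_def A3_def A4_def G_def omega_neq_0)
  have "map (\<lambda>X. mmul X G) ?Xs = [A1, A2, A3, A4]"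
    by (simp add: A1_def A2_def A3_def A4_def G_def mmul_def Tmat_def Smat_def Tw_def Twinv_def
        algebra_simps)
  then have "slash_sum k P [A1, A2, A3, A4] = slash k (slash_sum k P ?Xs) G"
    by (simp add: slash_slash_sum nonzero)
  also have "\<dots> = 0"
    using assms(2) by (simp add: kerX_def)
  finally have sum_A: "slash_sum k P [A1, A2, A3, A4] = 0" .
  have "map eps_conj ?Xs = [- mmul Smat A2, - mmul Smat A1, mmul Smat A4, mmul Smat A3]"
    by (simp add: A1_def A2_def A3_def A4_def eps_conj_def epsmat_def mmul_def Tmat_def Smat_def
        Tw_def Twinv_def algebra_simps)
  then have "slash_sum k P (map eps_conj ?Xs) = - slash_sum k P [A1, A2, A3, A4]"
    by (simp add: slash_sum_def slash_uminus_mat slash_Smat_mmul[OF S] nonzero algebra_simps)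
  then show "slash_sum k P (map eps_conj ?Xs) = 0"
    by (simp add: sum_A)
qed

section \<open>The eigenspace decomposition\<close>

lemma Wkk_subset_Vkk: "Wkk k \<subseteq> Vkk k"
  by (auto simp: Wkk_def kerX_def)

lemma Wkk_0: "0 \<in> Wkk k"
  by (simp add: Wkk_def kerX_0)

lemma Wkk_add: "P \<in> Wkk k \<Longrightarrow> Q \<in> Wkk k \<Longrightarrow> P + Q \<in> Wkk k"
  by (simp add: Wkk_def kerX_add)

lemma Wkk_smult: "P \<in> Wkk k \<Longrightarrow> smult [:c:] P \<in> Wkk k"
  by (simp add: Wkk_def kerX_smult)

lemma slash_epsmat_in_Wkk: "P \<in> Wkk k \<Longrightarrow> slash k P epsmat \<in> Wkk k"
  by (simp add: Wkk_def slash_epsmat_kerX_Smat slash_epsmat_kerX_Umat slash_epsmat_kerX_Tw)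

lemma slash_epsmat_image_Wkk: "(\<lambda>P. slash k P epsmat) ` Wkk k = Wkk k"
proof
  show "(\<lambda>P. slash k P epsmat) ` Wkk k \<subseteq> Wkk k"
    using slash_epsmat_in_Wkk by blast
  show "Wkk k \<subseteq> (\<lambda>P. slash k P epsmat) ` Wkk k"
  proof
    fix P
    assume P: "P \<in> Wkk k"
    then have "P \<in> Vkk k"
      using Wkk_subset_Vkk by blast
    then have "P = slash k (slash k P epsmat) epsmat"
      by (simp add: slash_epsmat_epsmat)
    then show "P \<in> (\<lambda>P. slash k P epsmat) ` Wkk k"
      using slash_epsmat_in_Wkk[OF P] by blast
  qed
qed

lemma parity_part_in_Wpm:
  assumes "s * s = 1" and P: "P \<in> Wkk k"
  shows "smult [:1 / 2:] (P + smult [:s:] (slash k P epsmat)) \<in> Wpm k s"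
proof -
  let ?Q = "smult [:1 / 2:] (P + smult [:s:] (slash k P epsmat))"
  have "?Q \<in> Wkk k"
    using P by (intro Wkk_smult Wkk_add slash_epsmat_in_Wkk)
  moreover have "ev2 ?Q (- z) (- w) = s * ev2 ?Q z w" for z w
  proof -
    have "P \<in> Vkk k"
      using P Wkk_subset_Vkk by blast
    moreover have "s * (s * x) = x" for x
      using assms(1) by (simp flip: mult.assoc)
    ultimately show ?thesis
      by (simp add: ev2_add ev2_smult ev2_slash_epsmat algebra_simps)
  qed
  ultimately show ?thesis
    using Wkk_subset_Vkk by (auto simp: Wpm_def)
qed

lemma Wkk_eq_parity_sums: "Wkk k = {P + Q | P Q. P \<in> Wpm k 1 \<and> Q \<in> Wpm k (- 1)}"
proof
  show "Wkk k \<subseteq> {P + Q | P Q. P \<in> Wpm k 1 \<and> Q \<in> Wpm k (- 1)}"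
  proof
    fix P
    assume P: "P \<in> Wkk k"
    let ?Q = "\<lambda>s. smult [:1 / 2:] (P + smult [:s:] (slash k P epsmat))"
    have "P = ?Q 1 + ?Q (- 1)"
      by (intro ev2_inject) (simp add: ev2_add ev2_smult field_simps)
    moreover have "?Q 1 \<in> Wpm k 1" "?Q (- 1) \<in> Wpm k (- 1)"
      using P by (simp_all add: parity_part_in_Wpm)
    ultimately show "P \<in> {P + Q | P Q. P \<in> Wpm k 1 \<and> Q \<in> Wpm k (- 1)}"
      by blast
  qed
  show "{P + Q | P Q. P \<in> Wpm k 1 \<and> Q \<in> Wpm k (- 1)} \<subseteq> Wkk k"
    by (auto simp: Wpm_def intro: Wkk_add)
qed

lemma Wpm_1_inter_Wpm_minus_1: "Wpm k 1 \<inter> Wpm k (- 1) = {0}"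
proof -
  have "P = 0" if "P \<in> Wpm k 1" "P \<in> Wpm k (- 1)" for P
    using that by (intro ev2_inject) (force simp: Wpm_def)
  then show ?thesis
    by (auto simp: Wpm_def Wkk_0 Vkk_0)
qed

theorem proposition5p14:
  fixes k :: nat
  assumes "k \<ge> 1" and "odd k"
  shows "(\<lambda>P. slash k P epsmat) ` Wkk k = Wkk k
    \<and> Wkk k = {P + Q | P Q. P \<in> Wpm k 1 \<and> Q \<in> Wpm k (-1)}
    \<and> Wpm k 1 \<inter> Wpm k (-1) = {0}"
  using slash_epsmat_image_Wkk Wkk_eq_parity_sums Wpm_1_inter_Wpm_minus_1 by blast

end
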